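(* Let $\phi$ be a modal formula and $\Psi$ the set of its subformulas. If $\phi$ is satisfiable in the frame $(\mathbb{R},R_{>1})$ under some valuation, then $\phi$ is satisfiable in $(\mathbb{R},R_{>1})$ under a special valuation (with respect to $\Psi$).
   Context: Modal formulas are built from propositional variables using $\bot$, $\to$ and one unary modality $\lozenge$. In the frame $(\mathbb{R},R_{>1})$, $xR_{>1}y$ iff $|x-y|>1$. A valuation $v$ assigns subsets of $\mathbb{R}$ to variables and extends to $\overline{v}(\varphi)=\{x: x\models_v\varphi\}$, where $x\models_v\lozenge\varphi$ iff some $y$ with $|x-y|>1$ satisfies $\varphi$. A formula is satisfiable under $v$ if $\overline{v}(\phi)\ne\emptyset$. For a valuation $v$, let $B_v$ be the Boolean subalgebra of the powerset of $\mathbb{R}$ generated by $\{\overline{v}(\psi):\psi\in\Psi\}$, and let $X_v$ be the set of all real numbers that arise as infima or suprema of members of $B_v$. The valuation $v$ is called special if $X_v\subseteq\mathbb{Q}$. *)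

theory Defs
  imports Complex_Main
begin

datatype 'a fm = Var 'a | Bot | Imp "'a fm" "'a fm" | Dia "'a fm"

fun sat :: "('a \<Rightarrow> real set) \<Rightarrow> real \<Rightarrow> 'a fm \<Rightarrow> bool" where
  "sat v x (Var p) = (x \<in> v p)"
| "sat v x Bot = False"
| "sat v x (Imp a b) = (sat v x a \<longrightarrow> sat v x b)"
| "sat v x (Dia a) = (\<exists>y. \<bar>x - y\<bar> > 1 \<and> sat v y a)"

definition ext :: "('a \<Rightarrow> real set) \<Rightarrow> 'a fm \<Rightarrow> real set" where
  "ext v \<phi> = {x. sat v x \<phi>}"

fun subfms :: "'a fm \<Rightarrow> 'a fm set" where
  "subfms (Var p) = {Var p}"
| "subfms Bot = {Bot}"
| "subfms (Imp a b) = insert (Imp a b) (subfms a \<union> subfms b)"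
| "subfms (Dia a) = insert (Dia a) (subfms a)"

inductive_set bool_gen :: "real set set \<Rightarrow> real set set" for G where
  gen: "A \<in> G \<Longrightarrow> A \<in> bool_gen G"
| empty: "{} \<in> bool_gen G"
| compl: "A \<in> bool_gen G \<Longrightarrow> - A \<in> bool_gen G"
| union: "A \<in> bool_gen G \<Longrightarrow> B \<in> bool_gen G \<Longrightarrow> A \<union> B \<in> bool_gen G"

definition B_v :: "'a fm set \<Rightarrow> ('a \<Rightarrow> real set) \<Rightarrow> real set set" where
  "B_v \<Psi> v = bool_gen ((\<lambda>\<psi>. ext v \<psi>) ` \<Psi>)"

definition is_inf :: "real \<Rightarrow> real set \<Rightarrow> bool" where
  "is_inf r A \<longleftrightarrow> A \<noteq> {} \<and> (\<forall>a\<in>A. r \<le> a) \<and> (\<forall>s. (\<forall>a\<in>A. s \<le> a) \<longrightarrow> s \<le> r)"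

definition is_sup :: "real \<Rightarrow> real set \<Rightarrow> bool" where
  "is_sup r A \<longleftrightarrow> A \<noteq> {} \<and> (\<forall>a\<in>A. a \<le> r) \<and> (\<forall>s. (\<forall>a\<in>A. a \<le> s) \<longrightarrow> r \<le> s)"

definition X_v :: "'a fm set \<Rightarrow> ('a \<Rightarrow> real set) \<Rightarrow> real set" where
  "X_v \<Psi> v = {r. \<exists>A\<in>B_v \<Psi> v. is_inf r A \<or> is_sup r A}"

definition special :: "'a fm set \<Rightarrow> ('a \<Rightarrow> real set) \<Rightarrow> bool" where
  "special \<Psi> v \<longleftrightarrow> X_v \<Psi> v \<subseteq> \<rat>"

end

theory Submission
  imports Defs "HOL-Library.Infinite_Set"
begin

(*
  Pull the valuation back along a map r :: real => real, setting w p = r -` v p.  If r commutes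
  with the operator D A = {x. EX y:A. 1 < |x - y|} on the extension of every diamond subformula,
  then every subformula is interpreted under w as the r-preimage of its interpretation under v,
  so phi stays satisfiable and every member of B_v (subfms phi) w is a preimage under r.  If
  moreover r is constant near every irrational point, no irrational number is an infimum or
  supremum of such a preimage, so w is special.

  D A only depends on Inf A + 1 and Sup A - 1 (or on A being empty or unbounded).  So we collect
  the finitely many relevant extrema and their unit translates in a finite set T, move every
  t in T to a rational position q t with q (t + 1) = q t + 1, and build r as a step function with
  r (q t) = t that respects the order relative to T.  On the k-th step to the right of q t (the x
  with floor (1 / (x - q t)) = k) the value of r lies in the k-th set of an enumeration that
  visits every relevant set infinitely often, at a distance from t that tends to 0 with k; so a
  set whose infimum t is not attained is still met by r arbitrarily close to the right of q t
  (symmetrically on the left for suprema).  Beyond the outermost anchors the integer intervals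
  play the same role for unbounded sets.  All step boundaries are rational.
*)

lemma finite_subfms: "finite (subfms \<phi>)"
  by (induction \<phi>) auto

lemma self_subfms: "\<phi> \<in> subfms \<phi>"
  by (cases \<phi>) auto

lemma subfms_trans: "\<psi> \<in> subfms \<phi> \<Longrightarrow> subfms \<psi> \<subseteq> subfms \<phi>"
  by (induction \<phi>) auto

definition dia_set :: "real set \<Rightarrow> real set" where
  "dia_set A = {x. \<exists>y\<in>A. 1 < \<bar>x - y\<bar>}"

definition dia_below :: "real set \<Rightarrow> real set" where
  "dia_below A = {x. \<exists>y\<in>A. y + 1 < x}"

definition dia_above :: "real set \<Rightarrow> real set" where
  "dia_above A = {x. \<exists>y\<in>A. x + 1 < y}"

lemma dia_set_split: "dia_set A = dia_below A \<union> dia_above A"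
proof -
  have "\<And>x y :: real. 1 < \<bar>x - y\<bar> \<longleftrightarrow> y + 1 < x \<or> x + 1 < y" by arith
  then show ?thesis unfolding dia_set_def dia_below_def dia_above_def by blast
qed

lemma ext_Dia: "ext v (Dia a) = dia_set (ext v a)"
  by (auto simp: ext_def dia_set_def)

lemma ext_Imp: "ext v (Imp a b) = - ext v a \<union> ext v b"
  by (auto simp: ext_def)

lemma ext_vimage:
  assumes "\<And>a. Dia a \<in> subfms \<psi> \<Longrightarrow> dia_set (f -` ext v a) = f -` dia_set (ext v a)"
  shows "ext (\<lambda>p. f -` v p) \<psi> = f -` ext v \<psi>"
  using assms
proof (induction \<psi>)
  case (Imp a b)
  then show ?case by (simp add: ext_Imp vimage_Compl)
next
  case (Dia a)
  then show ?case by (simp add: ext_Dia)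
qed (auto simp: ext_def)

lemma is_inf_iff: "is_inf p B \<longleftrightarrow> (\<forall>y\<in>B. p \<le> y) \<and> (\<forall>\<epsilon>>0. \<exists>y\<in>B. y < p + \<epsilon>)"
proof
  assume inf: "is_inf p B"
  have "\<exists>y\<in>B. y < p + \<epsilon>" if "\<epsilon> > 0" for \<epsilon>
  proof (rule ccontr)
    assume "\<not> (\<exists>y\<in>B. y < p + \<epsilon>)"
    then have "\<forall>y\<in>B. p + \<epsilon> \<le> y" by (simp add: not_less)
    then have "p + \<epsilon> \<le> p" using inf unfolding is_inf_def by blast
    then show False using that by simp
  qed
  then show "(\<forall>y\<in>B. p \<le> y) \<and> (\<forall>\<epsilon>>0. \<exists>y\<in>B. y < p + \<epsilon>)"
    using inf unfolding is_inf_def by blast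
next
  assume lb: "(\<forall>y\<in>B. p \<le> y) \<and> (\<forall>\<epsilon>>0. \<exists>y\<in>B. y < p + \<epsilon>)"
  have "s \<le> p" if "\<forall>y\<in>B. s \<le> y" for s
  proof (rule ccontr)
    assume "\<not> s \<le> p"
    then obtain y where "y \<in> B" "y < p + (s - p)" using lb by (meson diff_gt_0_iff_gt not_le)
    then show False using that by fastforce
  qed
  moreover have "B \<noteq> {}" using lb zero_less_one by blast
  ultimately show "is_inf p B" using lb unfolding is_inf_def by blast
qed

lemma is_sup_iff: "is_sup p B \<longleftrightarrow> (\<forall>y\<in>B. y \<le> p) \<and> (\<forall>\<epsilon>>0. \<exists>y\<in>B. p - \<epsilon> < y)"
proof
  assume sup: "is_sup p B"
  have "\<exists>y\<in>B. p - \<epsilon> < y" if "\<epsilon> > 0" for \<epsilon>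
  proof (rule ccontr)
    assume "\<not> (\<exists>y\<in>B. p - \<epsilon> < y)"
    then have "\<forall>y\<in>B. y \<le> p - \<epsilon>" by (simp add: not_less)
    then have "p \<le> p - \<epsilon>" using sup unfolding is_sup_def by blast
    then show False using that by simp
  qed
  then show "(\<forall>y\<in>B. y \<le> p) \<and> (\<forall>\<epsilon>>0. \<exists>y\<in>B. p - \<epsilon> < y)"
    using sup unfolding is_sup_def by blast
next
  assume ub: "(\<forall>y\<in>B. y \<le> p) \<and> (\<forall>\<epsilon>>0. \<exists>y\<in>B. p - \<epsilon> < y)"
  have "p \<le> s" if "\<forall>y\<in>B. y \<le> s" for s
  proof (rule ccontr)
    assume "\<not> p \<le> s"
    then obtain y where "y \<in> B" "p - (p - s) < y" using ub by (meson diff_gt_0_iff_gt not_le)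
    then show False using that by fastforce
  qed
  moreover have "B \<noteq> {}" using ub zero_less_one by blast
  ultimately show "is_sup p B" using ub unfolding is_sup_def by blast
qed

lemma is_inf_Inf: "is_inf p B \<Longrightarrow> Inf B = p"
  unfolding is_inf_def by (intro cInf_eq_non_empty) auto

lemma is_sup_Sup: "is_sup p B \<Longrightarrow> Sup B = p"
  unfolding is_sup_def by (intro cSup_eq_non_empty) auto

lemma Inf_is_inf: "B \<noteq> {} \<Longrightarrow> bdd_below B \<Longrightarrow> is_inf (Inf B) B"
  unfolding is_inf_def by (auto intro: cInf_lower cInf_greatest)

lemma Sup_is_sup: "B \<noteq> {} \<Longrightarrow> bdd_above B \<Longrightarrow> is_sup (Sup B) B"
  unfolding is_sup_def by (auto intro: cSup_upper cSup_least)

lemma dia_below_is_inf: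
  assumes "is_inf p B" shows "dia_below B = {p + 1<..}"
proof -
  have "(\<exists>y\<in>B. y + 1 < x) \<longleftrightarrow> p + 1 < x" for x
  proof
    show "\<exists>y\<in>B. y + 1 < x \<Longrightarrow> p + 1 < x" using assms unfolding is_inf_iff by force
    show "p + 1 < x \<Longrightarrow> \<exists>y\<in>B. y + 1 < x"
      using assms unfolding is_inf_iff by (smt (verit, ccfv_SIG) diff_gt_0_iff_gt)
  qed
  then show ?thesis unfolding dia_below_def by auto
qed

lemma dia_above_is_sup:
  assumes "is_sup p B" shows "dia_above B = {..<p - 1}"
proof -
  have "(\<exists>y\<in>B. x + 1 < y) \<longleftrightarrow> x < p - 1" for x
  proof
    show "\<exists>y\<in>B. x + 1 < y \<Longrightarrow> x < p - 1" using assms unfolding is_sup_iff by force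
    show "x < p - 1 \<Longrightarrow> \<exists>y\<in>B. x + 1 < y"
      using assms unfolding is_sup_iff by (smt (verit, ccfv_SIG) diff_gt_0_iff_gt)
  qed
  then show ?thesis unfolding dia_above_def by auto
qed

lemma dia_below_unbounded: "\<not> bdd_below B \<Longrightarrow> dia_below B = UNIV"
  unfolding dia_below_def bdd_below_def by (auto simp: not_le) (metis less_diff_eq)

lemma dia_above_unbounded: "\<not> bdd_above B \<Longrightarrow> dia_above B = UNIV"
  unfolding dia_above_def bdd_above_def by (auto simp: not_le)

lemma bool_gen_vimage:
  assumes "A \<in> bool_gen G" and "G \<subseteq> range (vimage f)"
  shows "A \<in> range (vimage f)"
  using assms(1)
proof (induction rule: bool_gen.induct)
  case empty
  have "{} = f -` {}" by simp
  then show ?case by blast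
next
  case (compl A)
  then obtain B where "A = f -` B" by blast
  then have "- A = f -` (- B)" by auto
  then show ?case by blast
next
  case (union A C)
  then obtain B B' where "A = f -` B" "C = f -` B'" by blast
  then have "A \<union> C = f -` (B \<union> B')" by auto
  then show ?case by blast
qed (use assms(2) in blast)

lemma is_inf_not_locally_constant:
  fixes A :: "real set"
  assumes "is_inf z A"
  shows "\<not> (\<forall>\<^sub>F y in nhds z. y \<in> A \<longleftrightarrow> z \<in> A)"
proof
  assume "\<forall>\<^sub>F y in nhds z. y \<in> A \<longleftrightarrow> z \<in> A"
  then have "\<exists>d>0. \<forall>y. dist y z < d \<longrightarrow> (y \<in> A \<longleftrightarrow> z \<in> A)"
    by (simp only: eventually_nhds_metric)
  then obtain d where d: "d > 0" "\<And>y. \<bar>y - z\<bar> < d \<Longrightarrow> y \<in> A \<longleftrightarrow> z \<in> A"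
    unfolding dist_real_def by blast
  show False
  proof (cases "z \<in> A")
    case True
    have "\<bar>(z - d / 2) - z\<bar> < d" using \<open>d > 0\<close> by simp
    then have "z - d / 2 \<in> A" using d(2) True by blast
    then have "z \<le> z - d / 2" using assms unfolding is_inf_iff by blast
    then show False using \<open>d > 0\<close> by simp
  next
    case False
    obtain y where y: "y \<in> A" "y < z + d" using assms \<open>d > 0\<close> unfolding is_inf_iff by blast
    moreover have "z \<le> y" using assms y(1) unfolding is_inf_iff by blast
    ultimately have "\<bar>y - z\<bar> < d" by simp
    then show False using d(2) y(1) False by blast
  qed
qed

lemma is_sup_not_locally_constant:
  fixes A :: "real set"
  assumes "is_sup z A"
  shows "\<not> (\<forall>\<^sub>F y in nhds z. y \<in> A \<longleftrightarrow> z \<in> A)"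
proof
  assume "\<forall>\<^sub>F y in nhds z. y \<in> A \<longleftrightarrow> z \<in> A"
  then have "\<exists>d>0. \<forall>y. dist y z < d \<longrightarrow> (y \<in> A \<longleftrightarrow> z \<in> A)"
    by (simp only: eventually_nhds_metric)
  then obtain d where d: "d > 0" "\<And>y. \<bar>y - z\<bar> < d \<Longrightarrow> y \<in> A \<longleftrightarrow> z \<in> A"
    unfolding dist_real_def by blast
  show False
  proof (cases "z \<in> A")
    case True
    have "\<bar>(z + d / 2) - z\<bar> < d" using \<open>d > 0\<close> by simp
    then have "z + d / 2 \<in> A" using d(2) True by blast
    then have "z + d / 2 \<le> z" using assms unfolding is_sup_iff by blast
    then show False using \<open>d > 0\<close> by simp
  next
    case False
    obtain y where y: "y \<in> A" "z - d < y" using assms \<open>d > 0\<close> unfolding is_sup_iff by blast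
    moreover have "y \<le> z" using assms y(1) unfolding is_sup_iff by blast
    ultimately have "\<bar>y - z\<bar> < d" by simp
    then show False using d(2) y(1) False by blast
  qed
qed

lemma special_if_vimage:
  fixes f :: "real \<Rightarrow> real"
  assumes locally_constant: "\<And>x. x \<notin> \<rat> \<Longrightarrow> \<forall>\<^sub>F y in nhds x. f y = f x"
    and vimage: "\<And>\<psi>. \<psi> \<in> \<Psi> \<Longrightarrow> ext w \<psi> \<in> range (vimage f)"
  shows "special \<Psi> w"
  unfolding special_def
proof
  fix z assume "z \<in> X_v \<Psi> w"
  then obtain A where A: "A \<in> B_v \<Psi> w" and extremum: "is_inf z A \<or> is_sup z A"
    unfolding X_v_def by blast
  have "(\<lambda>\<psi>. ext w \<psi>) ` \<Psi> \<subseteq> range (vimage f)" using vimage by blast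
  then have "A \<in> range (vimage f)" using A unfolding B_v_def by (rule bool_gen_vimage[rotated])
  then obtain B where B: "A = f -` B" by blast
  show "z \<in> \<rat>"
  proof (rule ccontr)
    assume "z \<notin> \<rat>"
    then have "\<forall>\<^sub>F y in nhds z. f y = f z" by (rule locally_constant)
    then have "\<forall>\<^sub>F y in nhds z. y \<in> A \<longleftrightarrow> z \<in> A" unfolding B by (rule eventually_mono) simp
    then show False
      using extremum is_inf_not_locally_constant is_sup_not_locally_constant by blast
  qed
qed

lemma rational_approx_shift_invariant:
  assumes "c > 0"
  obtains q :: "real \<Rightarrow> real"
  where "\<And>t. q t \<in> \<rat>" and "\<And>t. \<bar>q t - t\<bar> < c" and "\<And>t. q (t + 1) = q t + 1"
proof -
  have "\<exists>s\<in>\<rat>. \<bar>s - u\<bar> < c" for u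
  proof -
    obtain s where "s \<in> \<rat>" "u - c < s" "s < u + c"
      using Rats_dense_in_real[of "u - c" "u + c"] \<open>c > 0\<close> by auto
    then show ?thesis by (intro bexI[of _ s]) auto
  qed
  then obtain R where R: "\<And>u. R u \<in> \<rat>" "\<And>u. \<bar>R u - u\<bar> < c" by metis
  define q where "q t = of_int \<lfloor>t\<rfloor> + R (frac t)" for t
  show thesis
  proof
    show "q t \<in> \<rat>" for t unfolding q_def using R(1) by simp
    show "\<bar>q t - t\<bar> < c" for t using R(2)[of "frac t"] unfolding q_def frac_def by simp
    show "q (t + 1) = q t + 1" for t unfolding q_def by (simp add: frac_def)
  qed
qed

lemma finite_set_uniform_gap:
  fixes T :: "real set"
  assumes "finite T"
  obtains g where "g > 0" and "\<And>t u. t \<in> T \<Longrightarrow> u \<in> T \<Longrightarrow> t < u \<Longrightarrow> t + g \<le> u"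
proof -
  define G where "G = insert 1 {u - t | t u. t \<in> T \<and> u \<in> T \<and> t < u}"
  have "finite G"
  proof -
    have "{u - t | t u. t \<in> T \<and> u \<in> T \<and> t < u} \<subseteq> (\<lambda>(t, u). u - t) ` (T \<times> T)" by auto
    then show ?thesis unfolding G_def using assms finite_subset by blast
  qed
  show thesis
  proof
    show "Min G > 0" using \<open>finite G\<close> unfolding G_def by auto
    show "t + Min G \<le> u" if "t \<in> T" "u \<in> T" "t < u" for t u
    proof -
      have "u - t \<in> G" using that unfolding G_def by blast
      then have "Min G \<le> u - t" using \<open>finite G\<close> by (rule Min_le[rotated])
      then show ?thesis by simp
    qed
  qed
qed

lemma ex_recurrent_enumeration:
  assumes "finite R"
  shows "\<exists>As :: nat \<Rightarrow> 'a. \<forall>A\<in>R. \<exists>\<^sub>\<infinity>k. As k = A"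
proof -
  obtain xs where xs: "set xs = R" using finite_list[OF assms] by blast
  define n where "n = length xs"
  define As where "As k = xs ! (k mod n)" for k
  have "\<exists>\<^sub>\<infinity>k. As k = A" if "A \<in> R" for A
  proof -
    have "A \<in> set xs" using xs that by simp
    then obtain j where j: "j < n" "xs ! j = A" unfolding n_def in_set_conv_nth by blast
    have "N \<le> n * N + j" for N using j(1) by (cases n) auto
    moreover have "As (n * N + j) = A" for N using j unfolding As_def by simp
    ultimately show ?thesis unfolding INFM_nat_le by blast
  qed
  then show ?thesis by blast
qed

definition pick :: "'a set \<Rightarrow> 'a set \<Rightarrow> 'a \<Rightarrow> 'a" where
  "pick A I d = (if A \<inter> I = {} then d else SOME y. y \<in> A \<inter> I)"

lemma pick_in: "d \<in> I \<Longrightarrow> pick A I d \<in> I"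
  unfolding pick_def by (auto intro: someI2_ex)

lemma pick_mem: "A \<inter> I \<noteq> {} \<Longrightarrow> pick A I d \<in> A"
  unfolding pick_def by (auto intro: someI2_ex)

lemma eventually_same_side:
  fixes x c :: real
  assumes "x \<noteq> c"
  shows "\<forall>\<^sub>F y in nhds x. (y < c \<longleftrightarrow> x < c) \<and> (c < y \<longleftrightarrow> c < x)"
proof (cases "x < c")
  case True
  have "\<forall>\<^sub>F y in nhds x. y < c" using order_tendstoD(2)[OF filterlim_ident True] .
  then show ?thesis by (rule eventually_mono) (use True in auto)
next
  case False
  then have "c < x" using assms by simp
  have "\<forall>\<^sub>F y in nhds x. c < y" using order_tendstoD(1)[OF filterlim_ident \<open>c < x\<close>] .
  then show ?thesis by (rule eventually_mono) (use \<open>c < x\<close> in auto)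
qed

lemma inverse_irrational: "y \<notin> \<rat> \<Longrightarrow> 1 / y \<notin> \<rat>"
  using Rats_divide[OF Rats_1, of "1 / y"] by auto

lemma eventually_floor_inverse_diff:
  fixes x c :: real
  assumes "x \<notin> \<rat>" "c \<in> \<rat>"
  shows "\<forall>\<^sub>F y in nhds x.
    \<lfloor>1 / (y - c)\<rfloor> = \<lfloor>1 / (x - c)\<rfloor> \<and> \<lfloor>1 / (c - y)\<rfloor> = \<lfloor>1 / (c - x)\<rfloor>"
proof -
  have "x - c \<notin> \<rat>"
  proof
    assume "x - c \<in> \<rat>"
    then have "(x - c) + c \<in> \<rat>" using assms(2) by (rule Rats_add)
    then show False using assms(1) by simp
  qed
  moreover have "c - x \<notin> \<rat>"
  proof
    assume "c - x \<in> \<rat>"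
    with assms(2) have "c - (c - x) \<in> \<rat>" by (rule Rats_diff)
    then show False using assms(1) by simp
  qed
  ultimately have not_Int: "1 / (x - c) \<notin> \<int>" "1 / (c - x) \<notin> \<int>"
    using inverse_irrational Ints_subset_Rats by blast+
  have "x \<noteq> c" using assms by auto
  then have "((\<lambda>y. 1 / (y - c)) \<longlongrightarrow> 1 / (x - c)) (nhds x)"
    and "((\<lambda>y. 1 / (c - y)) \<longlongrightarrow> 1 / (c - x)) (nhds x)"
    by (auto intro!: tendsto_intros filterlim_ident)
  then show ?thesis using not_Int by (intro eventually_conj eventually_floor_eq)
qed

locale rational_anchors =
  fixes T :: "real set" and q :: "real \<Rightarrow> real" and e :: real and As :: "nat \<Rightarrow> real set"
  assumes finite_T: "finite T" and T_nonempty: "T \<noteq> {}"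
    and e_pos: "0 < e" and e_rat: "e \<in> \<rat>"
    and T_gap: "\<And>t u. t \<in> T \<Longrightarrow> u \<in> T \<Longrightarrow> t < u \<Longrightarrow> t + e \<le> u"
    and q_gap: "\<And>t u. t \<in> T \<Longrightarrow> u \<in> T \<Longrightarrow> t < u \<Longrightarrow> q t + 2 * e < q u"
    and q_rat: "\<And>t. t \<in> T \<Longrightarrow> q t \<in> \<rat>"
    and q_shift: "\<And>t. q (t + 1) = q t + 1"
begin

lemma q_less_iff:
  assumes "t \<in> T" "u \<in> T"
  shows "q t < q u \<longleftrightarrow> t < u"
proof (cases t u rule: linorder_cases)
  case less
  then show ?thesis using q_gap[OF assms less] e_pos by simp
next
  case greater
  then show ?thesis using q_gap[OF assms(2,1) greater] e_pos by simp
qed simp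

lemma inj_q: "inj_on q T"
  by (rule inj_onI) (metis q_less_iff linorder_neqE_linordered_idom less_irrefl)

lemma q_le_iff: "t \<in> T \<Longrightarrow> u \<in> T \<Longrightarrow> q t \<le> q u \<longleftrightarrow> t \<le> u"
  using q_less_iff[of u t] by (simp add: not_less[symmetric])

definition lower :: "real \<Rightarrow> real set" where
  "lower x = {t \<in> T. q t < x}"

definition upper :: "real \<Rightarrow> real set" where
  "upper x = {t \<in> T. x < q t}"

definition near_right :: "real \<Rightarrow> nat \<Rightarrow> real" where
  "near_right t k = pick (As k) {t<..<t + e / (real k + 1)} (t + e / (real k + 1) / 2)"

definition near_left :: "real \<Rightarrow> nat \<Rightarrow> real" where
  "near_left t k = pick (As k) {t - e / (real k + 1)<..<t} (t - e / (real k + 1) / 2)"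

definition far_right :: "nat \<Rightarrow> real" where
  "far_right k = pick (As k) {Max T<..} (Max T + 1)"

definition far_left :: "nat \<Rightarrow> real" where
  "far_left k = pick (As k) {..<Min T} (Min T - 1)"

definition pullback :: "real \<Rightarrow> real" where
  "pullback x =
    (if x \<in> q ` T then inv_into T q x
     else if lower x \<noteq> {} \<and> x < q (Max (lower x)) + e
       then near_right (Max (lower x)) (nat \<lfloor>1 / (x - q (Max (lower x)))\<rfloor>)
     else if upper x \<noteq> {} \<and> q (Min (upper x)) - e < x
       then near_left (Min (upper x)) (nat \<lfloor>1 / (q (Min (upper x)) - x)\<rfloor>)
     else if lower x = {} then far_left (nat \<bar>\<lfloor>x\<rfloor>\<bar>)
     else if upper x = {} then far_right (nat \<bar>\<lfloor>x\<rfloor>\<bar>)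
     else (Max (lower x) + Min (upper x)) / 2)"

lemma near_right_bounds: "t < near_right t k \<and> near_right t k < t + e"
proof -
  have h: "0 < e / (real k + 1)" "e / (real k + 1) \<le> e" using e_pos by (auto simp: field_simps)
  moreover have "t + h / 2 \<in> {t<..<t + h}" if "0 < h" for h :: real using that by simp
  ultimately have "near_right t k \<in> {t<..<t + e / (real k + 1)}"
    unfolding near_right_def by (intro pick_in) blast
  then show ?thesis using h by auto
qed

lemma near_left_bounds: "t - e < near_left t k \<and> near_left t k < t"
proof -
  have h: "0 < e / (real k + 1)" "e / (real k + 1) \<le> e" using e_pos by (auto simp: field_simps)
  moreover have "t - h / 2 \<in> {t - h<..<t}" if "0 < h" for h :: real using that by simp
  ultimately have "near_left t k \<in> {t - e / (real k + 1)<..<t}"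
    unfolding near_left_def by (intro pick_in) blast
  then show ?thesis using h by auto
qed

lemma far_right_bound: "Max T < far_right k"
  using pick_in[of "Max T + 1" "{Max T<..}"] unfolding far_right_def by auto

lemma far_left_bound: "far_left k < Min T"
  using pick_in[of "Min T - 1" "{..<Min T}"] unfolding far_left_def by auto

lemma Max_lower: "lower x \<noteq> {} \<Longrightarrow> Max (lower x) \<in> T \<and> q (Max (lower x)) < x"
  using Max_in[of "lower x"] finite_T unfolding lower_def by auto

lemma Min_upper: "upper x \<noteq> {} \<Longrightarrow> Min (upper x) \<in> T \<and> x < q (Min (upper x))"
  using Min_in[of "upper x"] finite_T unfolding upper_def by auto

lemma le_Max_lower: "t \<in> lower x \<Longrightarrow> t \<le> Max (lower x)"
  using finite_T unfolding lower_def by auto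

lemma Min_upper_le: "t \<in> upper x \<Longrightarrow> Min (upper x) \<le> t"
  using finite_T unfolding upper_def by auto

lemma lower_or_upper: "x \<notin> q ` T \<Longrightarrow> t \<in> T \<Longrightarrow> t \<in> lower x \<or> t \<in> upper x"
  unfolding lower_def upper_def by (auto simp: image_iff)

lemma Max_lower_gap_Min_upper:
  assumes "lower x \<noteq> {}" "upper x \<noteq> {}"
  shows "Max (lower x) + e \<le> Min (upper x)"
proof -
  note a = Max_lower[OF assms(1)] and b = Min_upper[OF assms(2)]
  then have "q (Max (lower x)) < q (Min (upper x))" by linarith
  then have "Max (lower x) < Min (upper x)" using q_less_iff a b by blast
  then show ?thesis using T_gap a b by blast
qed

lemma pullback_anchor: "t \<in> T \<Longrightarrow> pullback (q t) = t"
  unfolding pullback_def using inv_into_f_f[OF inj_q] by simp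

lemma pullback_right_of_anchor:
  assumes t: "t \<in> T" and d: "0 < d" "d < e"
  shows "pullback (q t + d) = near_right t (nat \<lfloor>1 / d\<rfloor>)"
proof -
  have side: "q u < q t + d \<longleftrightarrow> u \<le> t" if "u \<in> T" for u
  proof (cases "u \<le> t")
    case True
    then show ?thesis using q_le_iff[OF that t] d by simp
  next
    case False
    then show ?thesis using q_gap[OF t that] e_pos d by simp
  qed
  have not_anchor: "q t + d \<notin> q ` T"
  proof
    assume "q t + d \<in> q ` T"
    then obtain u where "u \<in> T" "q u = q t + d" by auto
    then show False using side[of u] q_gap[OF t, of u] d by auto
  qed
  have "lower (q t + d) = {u \<in> T. u \<le> t}" using side unfolding lower_def by auto
  moreover have "Max {u \<in> T. u \<le> t} = t" using t finite_T by (intro Max_eqI) auto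
  ultimately show ?thesis using not_anchor t d unfolding pullback_def by auto
qed

lemma pullback_left_of_anchor:
  assumes t: "t \<in> T" and d: "0 < d" "d < e"
  shows "pullback (q t - d) = near_left t (nat \<lfloor>1 / d\<rfloor>)"
proof -
  have side: "q t - d < q u \<longleftrightarrow> t \<le> u" if "u \<in> T" for u
  proof (cases "t \<le> u")
    case True
    then show ?thesis using q_le_iff[OF t that] d by simp
  next
    case False
    then show ?thesis using q_gap[OF that t] e_pos d by simp
  qed
  have not_anchor: "q t - d \<notin> q ` T"
  proof
    assume "q t - d \<in> q ` T"
    then obtain u where "u \<in> T" "q u = q t - d" by auto
    then show False using side[of u] q_gap[OF _ t, of u] d by auto
  qed
  have "upper (q t - d) = {u \<in> T. t \<le> u}" using side unfolding upper_def by auto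
  moreover have "Min {u \<in> T. t \<le> u} = t" using t finite_T by (intro Min_eqI) auto
  moreover have "\<not> (q t - d < q (Max (lower (q t - d))) + e)" if "lower (q t - d) \<noteq> {}"
  proof -
    have a: "Max (lower (q t - d)) \<in> T" "q (Max (lower (q t - d))) < q t - d"
      using Max_lower[OF that] by auto
    then have "Max (lower (q t - d)) < t" using side by force
    then show ?thesis using q_gap[OF a(1) t] d by simp
  qed
  ultimately show ?thesis using not_anchor t d unfolding pullback_def by auto
qed

lemma q_le_q_Max: "t \<in> T \<Longrightarrow> q t \<le> q (Max T)"
  using q_le_iff finite_T T_nonempty by simp

lemma q_Min_le_q: "t \<in> T \<Longrightarrow> q (Min T) \<le> q t"
  using q_le_iff finite_T T_nonempty by simp

lemma pullback_above_anchors: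
  assumes "q (Max T) + e < x"
  shows "pullback x = far_right (nat \<bar>\<lfloor>x\<rfloor>\<bar>)"
proof -
  have "q t < x" if "t \<in> T" for t using q_le_q_Max[OF that] assms e_pos by linarith
  then have "lower x = T" "upper x = {}" "x \<notin> q ` T" unfolding lower_def upper_def by force+
  then show ?thesis using assms T_nonempty unfolding pullback_def by auto
qed

lemma pullback_below_anchors:
  assumes "x < q (Min T) - e"
  shows "pullback x = far_left (nat \<bar>\<lfloor>x\<rfloor>\<bar>)"
proof -
  have "x < q t" if "t \<in> T" for t using q_Min_le_q[OF that] assms e_pos by linarith
  then have "lower x = {}" "upper x = T" "x \<notin> q ` T" unfolding lower_def upper_def by force+
  then show ?thesis using assms unfolding pullback_def by auto
qed

lemma pullback_between:
  assumes "x \<notin> q ` T"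
  shows "(lower x \<noteq> {} \<longrightarrow> Max (lower x) < pullback x) \<and>
    (upper x \<noteq> {} \<longrightarrow> pullback x < Min (upper x))"
proof -
  let ?a = "Max (lower x)" and ?b = "Min (upper x)"
  have gap: "?a + e \<le> ?b" if "lower x \<noteq> {}" "upper x \<noteq> {}"
    using Max_lower_gap_Min_upper that .
  let ?near_a = "lower x \<noteq> {} \<and> x < q ?a + e" and ?near_b = "upper x \<noteq> {} \<and> q ?b - e < x"
  consider (right) "lower x \<noteq> {}" "x < q ?a + e"
    | (left) "\<not> ?near_a" "upper x \<noteq> {}" "q ?b - e < x"
    | (far_left) "\<not> ?near_a" "\<not> ?near_b" "lower x = {}"
    | (far_right) "\<not> ?near_a" "\<not> ?near_b" "lower x \<noteq> {}" "upper x = {}"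
    | (middle) "\<not> ?near_a" "\<not> ?near_b" "lower x \<noteq> {}" "upper x \<noteq> {}"
    by blast
  then show ?thesis
  proof cases
    case right
    then have "pullback x = near_right ?a (nat \<lfloor>1 / (x - q ?a)\<rfloor>)"
      using assms unfolding pullback_def by simp
    then have "?a < pullback x" "pullback x < ?a + e" using near_right_bounds by simp_all
    then show ?thesis using gap[OF right(1)] by fastforce
  next
    case left
    then have "pullback x = near_left ?b (nat \<lfloor>1 / (q ?b - x)\<rfloor>)"
      using assms unfolding pullback_def by auto
    then have "?b - e < pullback x" "pullback x < ?b" using near_left_bounds by simp_all
    then show ?thesis using gap[OF _ left(2)] by fastforce
  next
    case far_left
    then have "pullback x < Min T" using assms far_left_bound unfolding pullback_def by auto
    moreover have "Min T \<le> ?b" if "upper x \<noteq> {}" using Min_upper[OF that] finite_T by simp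
    ultimately show ?thesis using far_left(3) by (meson less_le_trans)
  next
    case far_right
    then have "Max T < pullback x" using assms far_right_bound unfolding pullback_def by auto
    moreover have "?a \<le> Max T" using Max_lower[OF far_right(3)] finite_T by simp
    ultimately show ?thesis using far_right(4) by (meson le_less_trans)
  next
    case middle
    then have "pullback x = (?a + ?b) / 2"
      using assms unfolding pullback_def by simp
    then show ?thesis using gap[OF middle(3,4)] e_pos by simp
  qed
qed

lemma pullback_order:
  assumes t: "t \<in> T"
  shows "pullback x < t \<longleftrightarrow> x < q t" and "t < pullback x \<longleftrightarrow> q t < x"
proof -
  have "(pullback x < t \<longleftrightarrow> x < q t) \<and> (t < pullback x \<longleftrightarrow> q t < x)"
  proof (cases "x \<in> q ` T")
    case True
    then obtain u where "u \<in> T" "x = q u" by blast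
    then show ?thesis using pullback_anchor q_less_iff t by simp
  next
    case not_anchor: False
    show ?thesis
    proof (cases "t \<in> lower x")
      case True
      then have "t < pullback x" "q t < x"
        using le_Max_lower pullback_between[OF not_anchor] unfolding lower_def by fastforce+
      then show ?thesis by simp
    next
      case False
      then have "t \<in> upper x" using lower_or_upper[OF not_anchor t] by blast
      then have "pullback x < t" "x < q t"
        using Min_upper_le pullback_between[OF not_anchor] unfolding upper_def by fastforce+
      then show ?thesis by simp
    qed
  qed
  then show "pullback x < t \<longleftrightarrow> x < q t" and "t < pullback x \<longleftrightarrow> q t < x" by auto
qed

lemma eventually_same_sides:
  assumes not_anchor: "x \<notin> q ` T"
  shows "\<forall>\<^sub>F y in nhds x. lower y = lower x \<and> upper y = upper x \<and> y \<notin> q ` T"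
proof -
  have "\<forall>\<^sub>F y in nhds x. \<forall>t\<in>T. (y < q t \<longleftrightarrow> x < q t) \<and> (q t < y \<longleftrightarrow> q t < x)"
    using not_anchor by (intro eventually_ball_finite finite_T ballI eventually_same_side) auto
  then show ?thesis
  proof (rule eventually_mono)
    fix y assume y: "\<forall>t\<in>T. (y < q t \<longleftrightarrow> x < q t) \<and> (q t < y \<longleftrightarrow> q t < x)"
    have "y \<noteq> q t" if "t \<in> T" for t
    proof
      assume "y = q t"
      then have "x = q t" using y that by (meson linorder_neqE_linordered_idom less_irrefl)
      then show False using not_anchor that by blast
    qed
    then show "lower y = lower x \<and> upper y = upper x \<and> y \<notin> q ` T"
      using y unfolding lower_def upper_def by auto
  qed
qed

lemma pullback_locally_constant:
  assumes irrational: "x \<notin> \<rat>"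
  shows "\<forall>\<^sub>F y in nhds x. pullback y = pullback x"
proof -
  have not_anchor: "x \<notin> q ` T" using irrational q_rat by auto
  define a b where "a = Max (lower x)" and "b = Min (upper x)"
  have near_a: "\<forall>\<^sub>F y in nhds x. lower x \<noteq> {} \<longrightarrow>
      (y < q a + e \<longleftrightarrow> x < q a + e) \<and> \<lfloor>1 / (y - q a)\<rfloor> = \<lfloor>1 / (x - q a)\<rfloor>"
  proof (cases "lower x = {}")
    case False
    then have qa: "q a \<in> \<rat>" using Max_lower q_rat unfolding a_def by blast
    then have "x \<noteq> q a + e" using irrational e_rat by auto
    show ?thesis
      using eventually_conj[OF eventually_same_side[OF \<open>x \<noteq> q a + e\<close>]
          eventually_floor_inverse_diff[OF irrational qa]]
      by (rule eventually_mono) simp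
  qed simp
  have near_b: "\<forall>\<^sub>F y in nhds x. upper x \<noteq> {} \<longrightarrow>
      (q b - e < y \<longleftrightarrow> q b - e < x) \<and> \<lfloor>1 / (q b - y)\<rfloor> = \<lfloor>1 / (q b - x)\<rfloor>"
  proof (cases "upper x = {}")
    case False
    then have qb: "q b \<in> \<rat>" using Min_upper q_rat unfolding b_def by blast
    then have "x \<noteq> q b - e" using irrational e_rat by auto
    show ?thesis
      using eventually_conj[OF eventually_same_side[OF \<open>x \<noteq> q b - e\<close>]
          eventually_floor_inverse_diff[OF irrational qb]]
      by (rule eventually_mono) simp
  qed simp
  have "\<forall>\<^sub>F y in nhds x. \<lfloor>y\<rfloor> = \<lfloor>x\<rfloor>"
    using irrational Ints_subset_Rats by (intro eventually_floor_eq[OF filterlim_ident]) auto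
  with eventually_same_sides[OF not_anchor] near_a near_b show ?thesis
  proof eventually_elim
    case (elim y)
    then show ?case using not_anchor unfolding pullback_def a_def b_def
      by (cases "lower x = {}"; cases "upper x = {}"; simp)
  qed
qed

lemma small_offset_with_index:
  assumes recurrent: "\<exists>\<^sub>\<infinity>k. As k = A" and "\<epsilon> > 0"
  obtains k d where "As k = A" and "0 < d" "d < \<epsilon>" "d < e" and "nat \<lfloor>1 / d\<rfloor> = k"
proof -
  have m: "0 < min \<epsilon> e" using \<open>\<epsilon> > 0\<close> e_pos by simp
  obtain N :: nat where N: "1 / min \<epsilon> e < N" using reals_Archimedean2 by blast
  obtain k where k: "N \<le> k" "As k = A" using recurrent unfolding INFM_nat_le by blast
  define d where "d = 1 / (real k + 1 / 2)"
  have "real N \<le> real k" using k(1) by simp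
  then have "1 / min \<epsilon> e < real k + 1 / 2" using N by linarith
  then have "1 / (real k + 1 / 2) < 1 / (1 / min \<epsilon> e)"
    using m by (intro divide_strict_left_mono) auto
  then have "0 < d" "d < \<epsilon>" "d < e" unfolding d_def by auto
  moreover have "nat \<lfloor>1 / d\<rfloor> = k" unfolding d_def by (simp add: floor_eq_iff)
  ultimately show thesis using that k(2) by blast
qed

lemma pullback_hits_right_of_anchor:
  assumes t: "t \<in> T" and recurrent: "\<exists>\<^sub>\<infinity>k. As k = A"
    and approx: "\<forall>\<delta>>0. \<exists>y\<in>A. t < y \<and> y < t + \<delta>" and "\<epsilon> > 0"
  shows "\<exists>x\<in>pullback -` A. q t < x \<and> x < q t + \<epsilon>"
proof -
  obtain k d where A_k: "As k = A" and d: "0 < d" "d < \<epsilon>" "d < e" "nat \<lfloor>1 / d\<rfloor> = k"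
    using small_offset_with_index[OF recurrent \<open>\<epsilon> > 0\<close>] .
  have "0 < e / (real k + 1)" using e_pos by simp
  then have "A \<inter> {t<..<t + e / (real k + 1)} \<noteq> {}" using approx by fastforce
  then have "near_right t k \<in> A" unfolding near_right_def A_k by (rule pick_mem)
  moreover have "pullback (q t + d) = near_right t k" using pullback_right_of_anchor[OF t d(1,3)] d(4) by simp
  ultimately show ?thesis using d(1,2) by (intro bexI[of _ "q t + d"]) auto
qed

lemma pullback_hits_left_of_anchor:
  assumes t: "t \<in> T" and recurrent: "\<exists>\<^sub>\<infinity>k. As k = A"
    and approx: "\<forall>\<delta>>0. \<exists>y\<in>A. t - \<delta> < y \<and> y < t" and "\<epsilon> > 0"
  shows "\<exists>x\<in>pullback -` A. q t - \<epsilon> < x \<and> x < q t"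
proof -
  obtain k d where A_k: "As k = A" and d: "0 < d" "d < \<epsilon>" "d < e" "nat \<lfloor>1 / d\<rfloor> = k"
    using small_offset_with_index[OF recurrent \<open>\<epsilon> > 0\<close>] .
  have "0 < e / (real k + 1)" using e_pos by simp
  then have "A \<inter> {t - e / (real k + 1)<..<t} \<noteq> {}" using approx by fastforce
  then have "near_left t k \<in> A" unfolding near_left_def A_k by (rule pick_mem)
  moreover have "pullback (q t - d) = near_left t k" using pullback_left_of_anchor[OF t d(1,3)] d(4) by simp
  ultimately show ?thesis using d(1,2) by (intro bexI[of _ "q t - d"]) auto
qed

lemma pullback_unbounded_above:
  assumes recurrent: "\<exists>\<^sub>\<infinity>k. As k = A" and unbounded: "\<not> bdd_above A"
  shows "\<not> bdd_above (pullback -` A)"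
proof
  assume "bdd_above (pullback -` A)"
  then obtain M where M: "\<And>x. x \<in> pullback -` A \<Longrightarrow> x \<le> M" unfolding bdd_above_def by blast
  obtain N :: nat where N: "max M (q (Max T) + e) < N" using reals_Archimedean2 by blast
  obtain k where k: "N \<le> k" "As k = A" using recurrent unfolding INFM_nat_le by blast
  define x where "x = real k + 1 / 2"
  have "real N \<le> real k" using k(1) by simp
  then have x: "max M (q (Max T) + e) < x" using N unfolding x_def by linarith
  have "\<lfloor>x\<rfloor> = int k" unfolding x_def by (simp add: floor_eq_iff)
  then have "pullback x = far_right k" using pullback_above_anchors x by simp
  moreover have "A \<inter> {Max T<..} \<noteq> {}" using unbounded unfolding bdd_above_def by (auto simp: not_le)
  ultimately have "x \<in> pullback -` A" unfolding far_right_def using k(2) by (auto intro: pick_mem)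
  then show False using M x by fastforce
qed

lemma pullback_unbounded_below:
  assumes recurrent: "\<exists>\<^sub>\<infinity>k. As k = A" and unbounded: "\<not> bdd_below A"
  shows "\<not> bdd_below (pullback -` A)"
proof
  assume "bdd_below (pullback -` A)"
  then obtain M where M: "\<And>x. x \<in> pullback -` A \<Longrightarrow> M \<le> x" unfolding bdd_below_def by blast
  obtain N :: nat where N: "1 - min M (q (Min T) - e) < N" using reals_Archimedean2 by blast
  obtain k where k: "N \<le> k" "As k = A" using recurrent unfolding INFM_nat_le by blast
  define x where "x = 1 / 2 - real k"
  have "real N \<le> real k" using k(1) by simp
  then have x: "x < min M (q (Min T) - e)" using N unfolding x_def by linarith
  have "\<lfloor>x\<rfloor> = - int k" unfolding x_def by (simp add: floor_eq_iff)
  then have "pullback x = far_left k" using pullback_below_anchors x by simp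
  moreover have "A \<inter> {..<Min T} \<noteq> {}" using unbounded unfolding bdd_below_def by (auto simp: not_le)
  ultimately have "x \<in> pullback -` A" unfolding far_left_def using k(2) by (auto intro: pick_mem)
  then show False using M x by fastforce
qed

lemma is_inf_vimage_pullback:
  assumes t: "t \<in> T" and inf: "is_inf t A" and recurrent: "\<exists>\<^sub>\<infinity>k. As k = A"
  shows "is_inf (q t) (pullback -` A)"
  unfolding is_inf_iff
proof (intro conjI ballI allI impI)
  fix x assume "x \<in> pullback -` A"
  then have "t \<le> pullback x" using inf unfolding is_inf_iff by auto
  then show "q t \<le> x" using pullback_order(1)[OF t, of x] by linarith
next
  fix \<epsilon> :: real assume "\<epsilon> > 0"
  show "\<exists>x\<in>pullback -` A. x < q t + \<epsilon>"
  proof (cases "t \<in> A")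
    case True
    then show ?thesis using pullback_anchor[OF t] \<open>\<epsilon> > 0\<close> by (intro bexI[of _ "q t"]) auto
  next
    case False
    have "\<exists>y\<in>A. t < y \<and> y < t + \<delta>" if "\<delta> > 0" for \<delta>
    proof -
      obtain y where y: "y \<in> A" "y < t + \<delta>" using inf \<open>\<delta> > 0\<close> unfolding is_inf_iff by blast
      moreover have "t \<le> y" using inf y(1) unfolding is_inf_iff by blast
      ultimately show ?thesis using False by (metis order_le_less)
    qed
    then show ?thesis using pullback_hits_right_of_anchor[OF t recurrent _ \<open>\<epsilon> > 0\<close>] by blast
  qed
qed

lemma is_sup_vimage_pullback:
  assumes t: "t \<in> T" and sup: "is_sup t A" and recurrent: "\<exists>\<^sub>\<infinity>k. As k = A"
  shows "is_sup (q t) (pullback -` A)"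
  unfolding is_sup_iff
proof (intro conjI ballI allI impI)
  fix x assume "x \<in> pullback -` A"
  then have "pullback x \<le> t" using sup unfolding is_sup_iff by auto
  then show "x \<le> q t" using pullback_order(2)[OF t, of x] by linarith
next
  fix \<epsilon> :: real assume "\<epsilon> > 0"
  show "\<exists>x\<in>pullback -` A. q t - \<epsilon> < x"
  proof (cases "t \<in> A")
    case True
    then show ?thesis using pullback_anchor[OF t] \<open>\<epsilon> > 0\<close> by (intro bexI[of _ "q t"]) auto
  next
    case False
    have "\<exists>y\<in>A. t - \<delta> < y \<and> y < t" if "\<delta> > 0" for \<delta>
    proof -
      obtain y where y: "y \<in> A" "t - \<delta> < y" using sup \<open>\<delta> > 0\<close> unfolding is_sup_iff by blast
      moreover have "y \<le> t" using sup y(1) unfolding is_sup_iff by blast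
      ultimately show ?thesis using False by (metis order_le_less)
    qed
    then show ?thesis using pullback_hits_left_of_anchor[OF t recurrent _ \<open>\<epsilon> > 0\<close>] by blast
  qed
qed

lemma dia_below_vimage_pullback:
  assumes recurrent: "\<exists>\<^sub>\<infinity>k. As k = A" and anchored: "\<And>i. is_inf i A \<Longrightarrow> i \<in> T \<and> i + 1 \<in> T"
  shows "dia_below (pullback -` A) = pullback -` dia_below A"
proof (cases "A = {}")
  case True
  then show ?thesis by (simp add: dia_below_def)
next
  case nonempty: False
  show ?thesis
  proof (cases "bdd_below A")
    case True
    define i where "i = Inf A"
    have inf: "is_inf i A" using Inf_is_inf[OF nonempty True] unfolding i_def .
    then have T: "i \<in> T" "i + 1 \<in> T" using anchored by auto
    have "dia_below (pullback -` A) = {q i + 1<..}"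
      using dia_below_is_inf[OF is_inf_vimage_pullback[OF T(1) inf recurrent]] .
    also have "\<dots> = pullback -` {i + 1<..}" using pullback_order(2)[OF T(2)] q_shift by auto
    also have "\<dots> = pullback -` dia_below A" using dia_below_is_inf[OF inf] by simp
    finally show ?thesis .
  next
    case False
    then show ?thesis using pullback_unbounded_below[OF recurrent] dia_below_unbounded by simp
  qed
qed

lemma dia_above_vimage_pullback:
  assumes recurrent: "\<exists>\<^sub>\<infinity>k. As k = A" and anchored: "\<And>s. is_sup s A \<Longrightarrow> s \<in> T \<and> s - 1 \<in> T"
  shows "dia_above (pullback -` A) = pullback -` dia_above A"
proof (cases "A = {}")
  case True
  then show ?thesis by (simp add: dia_above_def)
next
  case nonempty: False
  show ?thesis
  proof (cases "bdd_above A")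
    case True
    define s where "s = Sup A"
    have sup: "is_sup s A" using Sup_is_sup[OF nonempty True] unfolding s_def .
    then have T: "s \<in> T" "s - 1 \<in> T" using anchored by auto
    have q_s: "q (s - 1) = q s - 1" using q_shift[of "s - 1"] by simp
    have "dia_above (pullback -` A) = {..<q s - 1}"
      using dia_above_is_sup[OF is_sup_vimage_pullback[OF T(1) sup recurrent]] .
    also have "\<dots> = pullback -` {..<s - 1}" using pullback_order(1)[OF T(2)] q_s by auto
    also have "\<dots> = pullback -` dia_above A" using dia_above_is_sup[OF sup] by simp
    finally show ?thesis .
  next
    case False
    then show ?thesis using pullback_unbounded_above[OF recurrent] dia_above_unbounded by simp
  qed
qed

lemma dia_set_vimage_pullback:
  assumes "\<exists>\<^sub>\<infinity>k. As k = A"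
    and "\<And>i. is_inf i A \<Longrightarrow> i \<in> T \<and> i + 1 \<in> T" and "\<And>s. is_sup s A \<Longrightarrow> s \<in> T \<and> s - 1 \<in> T"
  shows "dia_set (pullback -` A) = pullback -` dia_set A"
  using dia_below_vimage_pullback[OF assms(1,2)] dia_above_vimage_pullback[OF assms(1,3)]
  by (simp add: dia_set_split)


lemma pullback_valuation:
  assumes recurrent: "\<And>a. Dia a \<in> subfms \<phi> \<Longrightarrow> \<exists>\<^sub>\<infinity>k. As k = ext v a"
    and inf_anchored: "\<And>a i. Dia a \<in> subfms \<phi> \<Longrightarrow> is_inf i (ext v a) \<Longrightarrow> i \<in> T \<and> i + 1 \<in> T"
    and sup_anchored: "\<And>a s. Dia a \<in> subfms \<phi> \<Longrightarrow> is_sup s (ext v a) \<Longrightarrow> s \<in> T \<and> s - 1 \<in> T"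
  shows "special (subfms \<phi>) (\<lambda>p. pullback -` v p)"
    and "ext (\<lambda>p. pullback -` v p) \<phi> = pullback -` ext v \<phi>"
proof -
  have ext_pullback: "ext (\<lambda>p. pullback -` v p) \<psi> = pullback -` ext v \<psi>" if "\<psi> \<in> subfms \<phi>" for \<psi>
  proof (rule ext_vimage)
    fix a assume "Dia a \<in> subfms \<psi>"
    then have "Dia a \<in> subfms \<phi>" using subfms_trans[OF that] by blast
    then show "dia_set (pullback -` ext v a) = pullback -` dia_set (ext v a)"
      using recurrent inf_anchored sup_anchored by (intro dia_set_vimage_pullback)
  qed
  show "special (subfms \<phi>) (\<lambda>p. pullback -` v p)"
  proof (rule special_if_vimage)
    show "\<forall>\<^sub>F y in nhds x. pullback y = pullback x" if "x \<notin> \<rat>" for x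
      using that by (rule pullback_locally_constant)
    show "ext (\<lambda>p. pullback -` v p) \<psi> \<in> range (vimage pullback)" if "\<psi> \<in> subfms \<phi>" for \<psi>
      using ext_pullback[OF that] by blast
  qed
  show "ext (\<lambda>p. pullback -` v p) \<phi> = pullback -` ext v \<phi>"
    using ext_pullback[OF self_subfms] .
qed
end

lemma rational_anchors_exist:
  assumes "finite T" and "T \<noteq> {}"
  obtains q e where "rational_anchors T q e"
proof -
  obtain g where g: "g > 0" "\<And>t u. t \<in> T \<Longrightarrow> u \<in> T \<Longrightarrow> t < u \<Longrightarrow> t + g \<le> u"
    using finite_set_uniform_gap[OF assms(1)] by blast
  obtain q where q: "\<And>t. q t \<in> \<rat>" "\<And>t. \<bar>q t - t\<bar> < g / 4" "\<And>t. q (t + 1) = q t + 1"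
    using rational_approx_shift_invariant[of "g / 4"] g(1) by auto
  obtain e where e: "e \<in> \<rat>" "0 < e" "e < g / 4"
    using Rats_dense_in_real[of 0 "g / 4"] g(1) by auto
  have "rational_anchors T q e"
  proof
    show "t + e \<le> u" if "t \<in> T" "u \<in> T" "t < u" for t u using g(2)[OF that] e by linarith
    show "q t + 2 * e < q u" if "t \<in> T" "u \<in> T" "t < u" for t u
      using g(2)[OF that] q(2)[of t] q(2)[of u] e(3) unfolding abs_less_iff by linarith
  qed (use assms q(1,3) e(1,2) in simp_all)
  then show thesis ..
qed

theorem lemma4p4:
  fixes \<phi> :: "'a fm"
  assumes "\<exists>v. ext v \<phi> \<noteq> {}"
  shows "\<exists>v. special (subfms \<phi>) v \<and> ext v \<phi> \<noteq> {}"
proof -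
  obtain v x0 where x0: "x0 \<in> ext v \<phi>" using assms by blast
  define Rel where "Rel = ext v ` {a. Dia a \<in> subfms \<phi>}"
  have "finite Rel"
    using finite_vimageI[OF finite_subfms, of Dia \<phi>] unfolding Rel_def by (simp add: vimage_def inj_on_def)
  obtain As :: "nat \<Rightarrow> real set" where As: "\<forall>A\<in>Rel. \<exists>\<^sub>\<infinity>k. As k = A"
    using ex_recurrent_enumeration[OF \<open>finite Rel\<close>] ..
  define T where "T = insert x0 (\<Union>A\<in>Rel. {Inf A, Inf A + 1, Sup A, Sup A - 1})"
  have "finite T" "T \<noteq> {}" using \<open>finite Rel\<close> unfolding T_def by auto
  then obtain q e where "rational_anchors T q e" by (rule rational_anchors_exist)
  then interpret rational_anchors T q e As .
  have "ext v a \<in> Rel" if "Dia a \<in> subfms \<phi>" for a using that unfolding Rel_def by blast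
  then have "special (subfms \<phi>) (\<lambda>p. pullback -` v p)"
    and ext_pullback: "ext (\<lambda>p. pullback -` v p) \<phi> = pullback -` ext v \<phi>"
    using As by (intro pullback_valuation; fastforce simp: T_def dest: is_inf_Inf is_sup_Sup)+
  moreover have "x0 \<in> T" unfolding T_def by blast
  then have "q x0 \<in> ext (\<lambda>p. pullback -` v p) \<phi>"
    using x0 pullback_anchor unfolding ext_pullback by simp
  ultimately show ?thesis by blast
qed

end
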